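(* Let $q\equiv0\pmod3$, $q\ge9$. The group $G_q$ acts transitively on the points of the axis $\Gamma_{\mathrm{A}}$ of $\Gamma$, i.e. of the line $x_0=x_3=0$.
   Context: $\mathrm{PG}(3,q)$ has points $P(x_0,x_1,x_2,x_3)$. The twisted cubic is $\mathcal{C}=\{P(t^3,t^2,t,1):t\in\mathbb{F}_q\}\cup\{P(1,0,0,0)\}$ and $G_q$ is the group of projectivities of $\mathrm{PG}(3,q)$ mapping $\mathcal{C}$ to itself. For $q\equiv0\pmod3$ the osculating planes $x_0-t^3x_3=0$ ($t\in\mathbb{F}_q$) and $x_3=0$ all contain the line $\Gamma_{\mathrm{A}}$: $x_0=x_3=0$, called the axis of $\Gamma$; it is fixed by $G_q$. *)

theory Defs
  imports "HOL-Analysis.Analysis"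
begin

text \<open>Homogeneous coordinates (x0,x1,x2,x3) of PG(3,q) are vectors in 'a^4,
  indexed 0,1,2,3. A point of PG(3,q) is represented by any nonzero vector;
  two nonzero vectors represent the same point iff they are proportional.\<close>

definition same_point :: "'a::field^4 \<Rightarrow> 'a^4 \<Rightarrow> bool" where
  "same_point v w \<longleftrightarrow> v \<noteq> 0 \<and> w \<noteq> 0 \<and> (\<exists>c. c \<noteq> 0 \<and> w = c *s v)"

definition coords4 :: "'a \<Rightarrow> 'a \<Rightarrow> 'a \<Rightarrow> 'a \<Rightarrow> 'a^4" where
  "coords4 a b c d = (\<chi> i. if i = 0 then a else if i = 1 then b else if i = 2 then c else d)"

definition twisted_cubic_reps :: "('a::field^4) set" where
  "twisted_cubic_reps = {coords4 (t^3) (t^2) t 1 | t. True} \<union> {coords4 1 0 0 0}"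

definition twisted_cubic :: "('a::field^4) set" where
  "twisted_cubic = {w. \<exists>u\<in>twisted_cubic_reps. same_point u w}"

definition G_q :: "('a::field^4^4) set" where
  "G_q = {A. invertible A \<and> (\<lambda>v. A *v v) ` twisted_cubic = twisted_cubic}"

definition axis_pts :: "('a::field^4) set" where
  "axis_pts = {v. v \<noteq> 0 \<and> v $ 0 = 0 \<and> v $ 3 = 0}"

end

theory Submission
  imports Defs
begin

(* Since 3 divides q, the field has characteristic 3 (an order-3 map without fixed points
   acts on the q^2 - 1 nonzero pairs).  The projectivities induced by t \<mapsto> t + c and
   t \<mapsto> 1/t lie in G_q; in characteristic 3 the first acts on an axis point P(0,a,b,0)
   as (a, b) \<mapsto> (a + 2cb, b), so every axis point with b \<noteq> 0 is moved to P(0,0,1,0),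
   and the second swaps P(0,1,0,0) and P(0,0,1,0). *)

lemma three_dvd_card_if_fixpoint_free_order_3:
  assumes "finite S" and maps: "\<And>x. x \<in> S \<Longrightarrow> f x \<in> S"
    and order_3: "\<And>x. x \<in> S \<Longrightarrow> f (f (f x)) = x"
    and no_fixpoint: "\<And>x. x \<in> S \<Longrightarrow> f x \<noteq> x"
  shows "3 dvd card S"
proof -
  define orbit where "orbit x = {x, f x, f (f x)}" for x
  have card_orbit: "card (orbit x) = 3" if "x \<in> S" for x
  proof -
    have "f (f x) \<noteq> x"
      using no_fixpoint[OF that] order_3[OF that] by metis
    moreover have "f x \<noteq> x" "f (f x) \<noteq> f x"
      using that maps no_fixpoint by auto
    ultimately show ?thesis
      unfolding orbit_def by simp
  qed
  have orbit_eq: "orbit y = orbit x" if "x \<in> S" "y \<in> orbit x" for x y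
    using that order_3[OF that(1)] unfolding orbit_def by auto
  have "S = \<Union> (orbit ` S)"
    using maps unfolding orbit_def by blast
  moreover have "3 dvd card (\<Union> (orbit ` S))"
  proof (rule dvd_partition)
    show "finite (\<Union> (orbit ` S))"
      using \<open>finite S\<close> unfolding orbit_def by simp
    show "\<forall>c\<in>orbit ` S. 3 dvd card c"
      using card_orbit by simp
    show "\<forall>c1\<in>orbit ` S. \<forall>c2\<in>orbit ` S. c1 \<noteq> c2 \<longrightarrow> c1 \<inter> c2 = {}"
      using orbit_eq by blast
  qed
  ultimately show ?thesis by simp
qed

lemma three_eq_zero_if_three_dvd_card:
  assumes "3 dvd CARD('a::{finite,field})"
  shows "(3::'a) = 0"
proof (rule ccontr)
  assume "(3::'a) \<noteq> 0"
  define rotate :: "'a \<times> 'a \<Rightarrow> 'a \<times> 'a" where "rotate = (\<lambda>(a, b). (b, - a - b))"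
  have "3 dvd card (UNIV - {(0, 0)} :: ('a \<times> 'a) set)"
  proof (rule three_dvd_card_if_fixpoint_free_order_3[where f = rotate])
    fix x :: "'a \<times> 'a"
    assume "x \<in> UNIV - {(0, 0)}"
    then obtain a b where x: "x = (a, b)" and "(a, b) \<noteq> (0, 0)"
      by (cases x) auto
    moreover have "a = 0" if "b = a" "- a - b = b"
    proof -
      from that have "3 * a = 0" by (simp add: algebra_simps)
      then show ?thesis using \<open>(3::'a) \<noteq> 0\<close> by simp
    qed
    ultimately show "rotate x \<noteq> x"
      unfolding rotate_def by auto
  qed (auto simp: rotate_def)
  moreover have "card (UNIV - {(0, 0)} :: ('a \<times> 'a) set) = CARD('a) * CARD('a) - 1"
    by (simp add: card_Diff_subset card_cartesian_product)
  moreover have "3 dvd CARD('a) * CARD('a)" and "CARD('a) * CARD('a) \<ge> 1"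
    using assms by (simp_all add: Suc_le_eq)
  ultimately have "3 dvd (1::nat)"
    by (metis dvd_diff_nat diff_diff_cancel)
  then show False by simp
qed

lemma coords4_nth [simp]:
  "coords4 a b c d $ 0 = a" "coords4 a b c d $ 1 = b"
  "coords4 a b c d $ 2 = c" "coords4 a b c d $ 3 = d"
  by (simp_all add: coords4_def)

lemma coords4_eq_iff:
  "coords4 a b c d = coords4 a' b' c' d' \<longleftrightarrow> a = a' \<and> b = b' \<and> c = c' \<and> d = d'"
  by (metis coords4_nth)

lemma vec4_eq_coords4: "(v::'a^4) = coords4 (v$0) (v$1) (v$2) (v$3)"
proof -
  have "i = 0 \<or> i = 1 \<or> i = 2 \<or> i = 3" for i :: 4
    using exhaust_4[of i] by auto
  then show ?thesis
    unfolding vec_eq_iff by (metis coords4_nth)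
qed

lemma zero_eq_coords4: "(0::'a::zero^4) = coords4 0 0 0 0"
  by (subst vec4_eq_coords4) simp

lemma smult_coords4: "(k::'a::field) *s coords4 a b c d = coords4 (k*a) (k*b) (k*c) (k*d)"
  by (subst vec4_eq_coords4) (simp add: vector_scalar_mult_def)

lemma sum_UNIV_4: "sum f (UNIV::4 set) = f 0 + f 1 + f 2 + f 3"
proof -
  have "f 4 = f 0"
    by (simp add: arg_cong[of "4::4" 0 f])
  then show ?thesis
    using sum_4[of f] by (simp add: ac_simps)
qed

lemma matrix_vector_mult_coords4:
  "coords4 (coords4 a00 a01 a02 a03) (coords4 a10 a11 a12 a13)
      (coords4 a20 a21 a22 a23) (coords4 a30 a31 a32 a33) *v coords4 x0 x1 x2 x3 =
   coords4 (a00*x0 + a01*x1 + a02*x2 + a03*x3) (a10*x0 + a11*x1 + a12*x2 + a13*x3)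
           (a20*x0 + a21*x1 + a22*x2 + a23*x3) (a30*x0 + a31*x1 + a32*x2 + a33*x3)"
  by (subst (2) vec4_eq_coords4) (simp add: matrix_vector_mult_def sum_UNIV_4)

lemma mat_1_eq_iff_coords4:
  "(A::'a::field^4^4) = mat 1 \<longleftrightarrow> (\<forall>a b c d. A *v coords4 a b c d = coords4 a b c d)"
  unfolding matrix_eq by (metis matrix_vector_mul_lid vec4_eq_coords4)

lemma same_point_smult_right: "v \<noteq> 0 \<Longrightarrow> c \<noteq> 0 \<Longrightarrow> same_point v (c *s v)"
  unfolding same_point_def by auto

lemma same_point_smult_left: "v \<noteq> 0 \<Longrightarrow> c \<noteq> 0 \<Longrightarrow> same_point (c *s v) v"
  unfolding same_point_def by (auto intro!: exI[of _ "inverse c"])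

lemma twisted_cubic_repsI [simp]:
  "coords4 (t^3) (t^2) t 1 \<in> twisted_cubic_reps" "coords4 1 0 0 0 \<in> twisted_cubic_reps"
  unfolding twisted_cubic_reps_def by blast+

lemma smult_twisted_cubic_reps:
  assumes "r \<in> twisted_cubic_reps" and "k \<noteq> 0"
  shows "k *s r \<in> twisted_cubic"
proof -
  have "r \<noteq> 0"
    using assms(1) unfolding twisted_cubic_reps_def by (auto simp: zero_eq_coords4 coords4_eq_iff)
  then show ?thesis
    using assms same_point_smult_right unfolding twisted_cubic_def by blast
qed

lemma twisted_cubic_reps_subset: "twisted_cubic_reps \<subseteq> twisted_cubic"
  using smult_twisted_cubic_reps[where k = 1] by auto

lemma matrix_vector_mult_twisted_cubic:
  assumes reps: "\<And>r. r \<in> twisted_cubic_reps \<Longrightarrow> A *v r \<in> twisted_cubic"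
    and "u \<in> twisted_cubic"
  shows "A *v u \<in> twisted_cubic"
proof -
  obtain r c where r: "r \<in> twisted_cubic_reps" and "c \<noteq> 0" and u: "u = c *s r"
    using \<open>u \<in> twisted_cubic\<close> unfolding twisted_cubic_def same_point_def by auto
  obtain r' d where r': "r' \<in> twisted_cubic_reps" and "d \<noteq> 0" and "A *v r = d *s r'"
    using reps[OF r] unfolding twisted_cubic_def same_point_def by auto
  then have "A *v u = (c * d) *s r'"
    using u by (simp add: vector_scalar_commute)
  then show ?thesis
    using smult_twisted_cubic_reps[OF r'] \<open>c \<noteq> 0\<close> \<open>d \<noteq> 0\<close> by simp
qed

lemma G_qI:
  fixes A B :: "'a::field^4^4"
  assumes inverse: "A ** B = mat 1" "B ** A = mat 1"
    and "\<And>r. r \<in> twisted_cubic_reps \<Longrightarrow> A *v r \<in> twisted_cubic"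
    and "\<And>r. r \<in> twisted_cubic_reps \<Longrightarrow> B *v r \<in> twisted_cubic"
  shows "A \<in> G_q"
  unfolding G_q_def
proof (intro CollectI conjI equalityI subsetI)
  show "invertible A"
    unfolding invertible_def using inverse by blast
next
  fix u :: "'a^4"
  assume "u \<in> (\<lambda>v. A *v v) ` twisted_cubic"
  then show "u \<in> twisted_cubic"
    using matrix_vector_mult_twisted_cubic assms(3) by blast
next
  fix u :: "'a^4"
  assume "u \<in> twisted_cubic"
  then have "B *v u \<in> twisted_cubic" and "u = A *v (B *v u)"
    using matrix_vector_mult_twisted_cubic assms(4) inverse(1)
    by (auto simp: matrix_vector_mul_assoc)
  then show "u \<in> (\<lambda>v. A *v v) ` twisted_cubic"
    by blast
qed

lemma G_q_mult:
  assumes "A \<in> G_q" and "B \<in> G_q"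
  shows "A ** B \<in> G_q"
proof -
  have "(\<lambda>v. (A ** B) *v v) ` twisted_cubic = (\<lambda>v. A *v v) ` (\<lambda>v. B *v v) ` twisted_cubic"
    by (simp add: image_image matrix_vector_mul_assoc)
  then show ?thesis
    using assms unfolding G_q_def by (auto intro: invertible_mult)
qed

lemma G_q_left_inverse:
  assumes "A \<in> G_q"
  obtains B where "B \<in> G_q" and "B ** A = mat 1"
proof -
  obtain B where AB: "A ** B = mat 1" and BA: "B ** A = mat 1"
    using assms unfolding G_q_def invertible_def by blast
  have "(\<lambda>v. B *v v) ` twisted_cubic = (\<lambda>v. B *v v) ` (\<lambda>v. A *v v) ` twisted_cubic"
    using assms unfolding G_q_def by simp
  also have "\<dots> = twisted_cubic"
    by (simp add: image_image matrix_vector_mul_assoc BA)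
  finally have "B \<in> G_q"
    unfolding G_q_def invertible_def using AB BA by blast
  with BA show thesis
    using that by blast
qed

definition reversal_matrix :: "'a::field^4^4" where
  "reversal_matrix =
     coords4 (coords4 0 0 0 1) (coords4 0 0 1 0) (coords4 0 1 0 0) (coords4 1 0 0 0)"

definition translation_matrix :: "'a::field \<Rightarrow> 'a^4^4" where
  "translation_matrix c =
     coords4 (coords4 1 (3*c) (3*c^2) (c^3)) (coords4 0 1 (2*c) (c^2))
       (coords4 0 0 1 c) (coords4 0 0 0 1)"

lemma reversal_matrix_apply:
  "reversal_matrix *v coords4 a b c d = coords4 d c b a"
  unfolding reversal_matrix_def matrix_vector_mult_coords4 by simp

lemma translation_matrix_apply:
  "translation_matrix k *v coords4 a b c d =
     coords4 (a + 3*k*b + 3*k^2*c + k^3*d) (b + 2*k*c + k^2*d) (c + k*d) d"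
  unfolding translation_matrix_def matrix_vector_mult_coords4 by (simp add: algebra_simps)

lemma reversal_matrix_involution: "reversal_matrix ** reversal_matrix = (mat 1 :: 'a::field^4^4)"
  unfolding mat_1_eq_iff_coords4
  by (simp add: matrix_vector_mul_assoc[symmetric] reversal_matrix_apply)

lemma translation_matrix_inverse:
  "translation_matrix k ** translation_matrix (-k) = (mat 1 :: 'a::field^4^4)"
  unfolding mat_1_eq_iff_coords4
  by (simp add: matrix_vector_mul_assoc[symmetric] translation_matrix_apply coords4_eq_iff
      algebra_simps power2_eq_square power3_eq_cube)

lemma reversal_matrix_twisted_cubic_reps:
  assumes "r \<in> twisted_cubic_reps"
  shows "reversal_matrix *v r \<in> twisted_cubic"
proof -
  have "coords4 1 t (t^2) (t^3) \<in> twisted_cubic" for t :: 'a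
  proof (cases "t = 0")
    case True
    then show ?thesis
      using twisted_cubic_reps_subset by auto
  next
    case False
    then have "coords4 1 t (t^2) (t^3) = t^3 *s coords4 ((1/t)^3) ((1/t)^2) (1/t) 1"
      by (simp add: smult_coords4 coords4_eq_iff power_divide field_simps power2_eq_square power3_eq_cube)
    moreover have "t^3 \<noteq> 0"
      using False by simp
    ultimately show ?thesis
      using smult_twisted_cubic_reps[OF twisted_cubic_repsI(1)] by metis
  qed
  moreover have "coords4 0 0 0 1 \<in> twisted_cubic"
    using twisted_cubic_reps_subset twisted_cubic_repsI(1)[of 0] by auto
  ultimately show ?thesis
    using assms unfolding twisted_cubic_reps_def by (auto simp: reversal_matrix_apply)
qed

lemma translation_matrix_twisted_cubic_reps:
  assumes "r \<in> twisted_cubic_reps"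
  shows "translation_matrix k *v r \<in> twisted_cubic"
proof -
  have "translation_matrix k *v coords4 (t^3) (t^2) t 1 = coords4 ((t+k)^3) ((t+k)^2) (t+k) 1" for t
    by (simp add: translation_matrix_apply coords4_eq_iff algebra_simps power2_eq_square power3_eq_cube)
  then show ?thesis
    using assms twisted_cubic_reps_subset
    unfolding twisted_cubic_reps_def by (auto simp: translation_matrix_apply)
qed

lemma reversal_matrix_in_G_q: "reversal_matrix \<in> G_q"
  using G_qI reversal_matrix_involution reversal_matrix_twisted_cubic_reps by blast

lemma translation_matrix_in_G_q: "translation_matrix k \<in> G_q"
  using G_qI translation_matrix_inverse translation_matrix_inverse[of "-k"]
    translation_matrix_twisted_cubic_reps by fastforce

lemma axis_point_to_base_point:
  assumes char_3: "(3::'a::field) = 0" and "v \<in> (axis_pts :: ('a^4) set)"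
  obtains A k where "A \<in> G_q" and "k \<noteq> 0" and "A *v v = k *s coords4 0 0 1 0"
proof -
  define a b where "a = v $ 1" and "b = v $ 2"
  have v: "v = coords4 0 a b 0"
    using \<open>v \<in> axis_pts\<close> unfolding axis_pts_def a_def b_def by (subst vec4_eq_coords4) simp
  have "a \<noteq> 0 \<or> b \<noteq> 0"
    using \<open>v \<in> axis_pts\<close> unfolding axis_pts_def v by (auto simp: zero_eq_coords4)
  show thesis
  proof (cases "b = 0")
    case True
    then have "reversal_matrix *v v = a *s coords4 0 0 1 0"
      using v by (simp add: reversal_matrix_apply smult_coords4)
    then show thesis
      using that reversal_matrix_in_G_q True \<open>a \<noteq> 0 \<or> b \<noteq> 0\<close> by blast
  next
    case False
    have "(2::'a) + 1 = 0"
      using char_3 by simp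
    then have "(2::'a) \<noteq> 0"
      by (metis add_0 one_neq_zero)
    define c where "c = - a / (2 * b)"
    have "a + 2 * c * b = 0"
      unfolding c_def using False \<open>(2::'a) \<noteq> 0\<close> by (simp add: field_simps)
    then have "translation_matrix c *v v = b *s coords4 0 0 1 0"
      using v char_3 by (simp add: translation_matrix_apply smult_coords4)
    then show thesis
      using that translation_matrix_in_G_q False by blast
  qed
qed

lemma same_point_if_common_image:
  fixes A A' B :: "'a::field^4^4"
  assumes "B ** A' = mat 1" and "A *v v = k *s e" and "A' *v w = l *s e"
    and "k \<noteq> 0" and "l \<noteq> 0" and "w \<noteq> 0"
  shows "same_point ((B ** A) *v v) w"
proof -
  have "w = l *s (B *v e)"
    using assms(1,3) by (metis matrix_vector_mul_assoc matrix_vector_mul_lid vector_scalar_commute)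
  then have "(B ** A) *v v = (k / l) *s w"
    using assms(2,5) by (simp add: matrix_vector_mul_assoc[symmetric] vector_scalar_commute)
  then show ?thesis
    using assms(4-6) same_point_smult_left[of w "k / l"] by simp
qed

theorem proposition7p1:
  assumes "CARD('a::{finite,field}) mod 3 = 0" and "CARD('a) \<ge> 9"
  shows "\<forall>v\<in>(axis_pts :: ('a^4) set). \<forall>w\<in>axis_pts.
           \<exists>A\<in>(G_q :: ('a^4^4) set). same_point (A *v v) w"
proof (intro ballI)
  fix v w :: "'a^4"
  assume v: "v \<in> axis_pts" and w: "w \<in> axis_pts"
  have char_3: "(3::'a) = 0"
    using assms(1) three_eq_zero_if_three_dvd_card by auto
  obtain A k where A: "A \<in> G_q" "k \<noteq> 0" "A *v v = k *s coords4 0 0 1 0"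
    using axis_point_to_base_point[OF char_3 v] .
  obtain A' l where A': "A' \<in> G_q" "l \<noteq> 0" "A' *v w = l *s coords4 0 0 1 0"
    using axis_point_to_base_point[OF char_3 w] .
  obtain B where B: "B \<in> G_q" "B ** A' = mat 1"
    using G_q_left_inverse[OF A'(1)] .
  have "same_point ((B ** A) *v v) w"
    using same_point_if_common_image[OF B(2) A(3) A'(3) A(2) A'(2)] w
    unfolding axis_pts_def by simp
  then show "\<exists>A\<in>G_q. same_point (A *v v) w"
    using G_q_mult[OF B(1) A(1)] by blast
qed

end
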